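(* Let $\{S_k:k\in\mathbb{N}\}$ be independent and identically distributed random matrices and let $\tau_\ell,\gamma_\ell$ be as in the context. If, for some $\ell\in\mathbb{N}$, $\tau_{\ell-1}$ is finite, then the random variables $\tau_j-\tau_{j-1}$, $j\le \ell$, exist and are independent and identically distributed, and $\gamma_j$, $j\le\ell$, are independent and identically distributed.
   Context: $A\in\mathbb{R}^{m\times n}$, $B\in\mathbb{R}^{m\times m}$ symmetric positive definite with symmetric positive definite square root $B^{1/2}$; $S_k\in\mathbb{R}^{n\times p}$; $Q_k$ is a matrix whose columns form an orthonormal basis of $\operatorname{col}(B^{1/2}AS_k)$. Stopping times: $\tau_0=0$; if $\tau_{\ell}<\infty$, $\tau_{\ell+1}$ is the first index $j>\tau_\ell$ such that $\operatorname{col}(Q_{\tau_\ell+1})+\cdots+\operatorname{col}(Q_j)=\operatorname{col}(B^{1/2}A)$ (and $\tau_{\ell+1}=\infty$ otherwise). On $\{\tau_\ell<\infty\}$, $\gamma_\ell$ is the operator $2$-norm of the restriction of $\prod_{k=\tau_{\ell-1}+1}^{\tau_\ell}(I-Q_kQ_k^\top)$ to $\operatorname{col}(B^{1/2}A)$. *)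

theory Defs
  imports "HOL-Probability.Probability"
begin

definition colspace :: "real^'c^'r \<Rightarrow> (real^'r) set" where
  "colspace M = range (\<lambda>x. M *v x)"

definition oproj :: "(real^'r) set \<Rightarrow> real^'r \<Rightarrow> real^'r" where
  "oproj V x = (THE y. y \<in> V \<and> (\<forall>v\<in>V. (x - y) \<bullet> v = 0))"

(* the matrix of the orthogonal projector onto V; for Q with orthonormal columns
   spanning V this is Q Q^T *)
definition projmat :: "(real^'r) set \<Rightarrow> real^'r^'r" where
  "projmat V = (\<chi> i j. oproj V (axis j 1) $ i)"

primrec mprod :: "(nat \<Rightarrow> real^'r^'r) \<Rightarrow> nat \<Rightarrow> nat \<Rightarrow> real^'r^'r" where
  "mprod f a 0 = mat 1"
| "mprod f a (Suc c) = f (a + c) ** mprod f a c"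

definition opnorm_on :: "(real^'r) set \<Rightarrow> real^'r^'r \<Rightarrow> real" where
  "opnorm_on V T = Sup {norm (T *v x) | x. x \<in> V \<and> norm x \<le> 1}"

(* covering condition: col(Q_{t+1}) + ... + col(Q_j) = col(W), where col(Q_k) = col(M k) *)
definition covers :: "(nat \<Rightarrow> real^'c^'r) \<Rightarrow> real^'d^'r \<Rightarrow> nat \<Rightarrow> nat \<Rightarrow> bool" where
  "covers M W t j \<longleftrightarrow> span (\<Union>k\<in>{t+1..j}. colspace (M k)) = colspace W"

primrec tau :: "(nat \<Rightarrow> real^'c^'r) \<Rightarrow> real^'d^'r \<Rightarrow> nat \<Rightarrow> enat" where
  "tau M W 0 = 0"
| "tau M W (Suc l) =
     (case tau M W l of
        \<infinity> \<Rightarrow> \<infinity>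
      | enat t \<Rightarrow> (if \<exists>j>t. covers M W t j then enat (LEAST j. t < j \<and> covers M W t j) else \<infinity>))"

(* gamma_l (l \<ge> 1), defined on {tau_l < \<infinity>} (and tau_{l-1} < \<infinity> then holds);
   conventionally 0 elsewhere *)
definition gamma :: "(nat \<Rightarrow> real^'c^'r) \<Rightarrow> real^'d^'r \<Rightarrow> nat \<Rightarrow> real" where
  "gamma M W l =
     (case (tau M W (l - 1), tau M W l) of
        (enat a, enat b) \<Rightarrow>
          opnorm_on (colspace W)
            (mprod (\<lambda>k. mat 1 - projmat (colspace (M k))) (a + 1) (b - a))
      | _ \<Rightarrow> 0)"

definition sym_pd :: "real^'m^'m \<Rightarrow> bool" where
  "sym_pd B \<longleftrightarrow> transpose B = B \<and> (\<forall>x. x \<noteq> 0 \<longrightarrow> x \<bullet> (B *v x) > 0)"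

end

theory Submission
  imports Defs
begin

text \<open>The stopping times are renewal times of the i.i.d. sequence \<open>S\<^sub>1, S\<^sub>2, \<dots>\<close>: the event
  \<open>\<tau>\<^sub>1 = d\<close> and the value of \<open>\<gamma>\<^sub>1\<close> on it depend only on \<open>S\<^sub>1, \<dots>, S\<^sub>d\<close>, while the later
  increments \<open>\<tau>\<^bsub>j+1\<^esub> - \<tau>\<^sub>j\<close> and norms \<open>\<gamma>\<^bsub>j+1\<^esub>\<close> are the same functionals of the sequence
  restarted after \<open>\<tau>\<^sub>1\<close>. Splitting the infinite product measure at \<open>d\<close> and summing over \<open>d\<close>
  factorizes the joint law of the first \<open>l\<close> blocks into copies of the law of the first block.
  This needs \<open>\<tau>\<^sub>1 < \<infinity>\<close> almost surely, which follows from \<open>\<tau>\<^bsub>l-1\<^esub> < \<infinity>\<close> when \<open>l \<ge> 2\<close>.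
  Measurability comes from expressing the covering condition through the Gram matrix
  \<open>\<Sum> M\<^sub>k M\<^sub>k\<^sup>T\<close> and the projector entries through distances to column spaces.\<close>

section \<open>Orthogonal projections and column spaces\<close>

lemma oproj_eqI:
  fixes V :: "(real^'r) set"
  assumes V: "subspace V" and y: "y \<in> V" "\<forall>v\<in>V. (x - y) \<bullet> v = 0"
  shows "oproj V x = y"
  unfolding oproj_def
proof (rule the_equality)
  fix y' assume y': "y' \<in> V \<and> (\<forall>v\<in>V. (x - y') \<bullet> v = 0)"
  have "y' - y \<in> V" using y y' V by (simp add: subspace_diff)
  then have "(x - y') \<bullet> (y' - y) = 0" "(x - y) \<bullet> (y' - y) = 0" using y y' by auto
  then have "(y' - y) \<bullet> (y' - y) = 0" by (simp add: inner_diff_left)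
  then show "y' = y" by simp
qed (use y in auto)

lemma
  fixes V :: "(real^'r) set"
  assumes V: "subspace V"
  shows oproj_mem: "oproj V x \<in> V"
    and oproj_orthogonal: "v \<in> V \<Longrightarrow> (x - oproj V x) \<bullet> v = 0"
proof -
  obtain y z where y: "y \<in> span V" and z: "\<And>w. w \<in> span V \<Longrightarrow> orthogonal z w" and x: "x = y + z"
    using orthogonal_subspace_decomp_exists[of V x] by blast
  have "y \<in> V" using y V by (metis span_eq_iff)
  moreover have "\<forall>v\<in>V. (x - y) \<bullet> v = 0"
    using z[OF span_base] x by (simp add: orthogonal_def)
  ultimately have "oproj V x = y" by (rule oproj_eqI[OF V])
  with \<open>y \<in> V\<close> \<open>\<forall>v\<in>V. (x - y) \<bullet> v = 0\<close>
  show "oproj V x \<in> V" "v \<in> V \<Longrightarrow> (x - oproj V x) \<bullet> v = 0" by auto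
qed

lemma oproj_add:
  fixes V :: "(real^'r) set"
  assumes V: "subspace V"
  shows "oproj V (a + b) = oproj V a + oproj V b"
proof (rule oproj_eqI[OF V])
  show "oproj V a + oproj V b \<in> V" using oproj_mem[OF V] V by (simp add: subspace_add)
  show "\<forall>v\<in>V. (a + b - (oproj V a + oproj V b)) \<bullet> v = 0"
  proof
    fix v assume "v \<in> V"
    then have "(a - oproj V a) \<bullet> v + (b - oproj V b) \<bullet> v = 0" using oproj_orthogonal[OF V] by simp
    then show "(a + b - (oproj V a + oproj V b)) \<bullet> v = 0"
      by (simp add: inner_diff_left inner_add_left algebra_simps)
  qed
qed

lemma inner_oproj:
  fixes V :: "(real^'r) set"
  assumes V: "subspace V"
  shows "a \<bullet> oproj V b = oproj V a \<bullet> oproj V b"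
proof -
  have "(a - oproj V a) \<bullet> oproj V b = 0" by (rule oproj_orthogonal[OF V oproj_mem[OF V]])
  then show ?thesis by (simp add: inner_diff_left)
qed

lemma infdist_eq_norm_oproj:
  fixes V :: "(real^'r) set"
  assumes V: "subspace V"
  shows "infdist x V = norm (x - oproj V x)"
proof (rule antisym)
  show "infdist x V \<le> norm (x - oproj V x)"
    using infdist_le[OF oproj_mem[OF V]] by (simp add: dist_norm)
  have "norm (x - oproj V x) \<le> norm (x - v)" if v: "v \<in> V" for v
  proof -
    have "oproj V x - v \<in> V" using oproj_mem[OF V] v V by (simp add: subspace_diff)
    then have "orthogonal (x - oproj V x) (oproj V x - v)"
      using oproj_orthogonal[OF V] by (simp add: orthogonal_def)
    from norm_add_Pythagorean[OF this] have "(norm (x - v))\<^sup>2 = (norm (x - oproj V x))\<^sup>2 + (norm (oproj V x - v))\<^sup>2"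
      by simp
    then show ?thesis by (simp add: power2_le_imp_le)
  qed
  moreover have "V \<noteq> {}" using oproj_mem[OF V] by blast
  ultimately show "norm (x - oproj V x) \<le> infdist x V"
    unfolding infdist_notempty[OF \<open>V \<noteq> {}\<close>] dist_norm by (intro cINF_greatest) auto
qed

lemma norm_oproj_sq:
  fixes V :: "(real^'r) set"
  assumes V: "subspace V"
  shows "(norm (oproj V x))\<^sup>2 = (norm x)\<^sup>2 - (infdist x V)\<^sup>2"
proof -
  have "orthogonal (x - oproj V x) (oproj V x)"
    using oproj_orthogonal[OF V oproj_mem[OF V]] by (simp add: orthogonal_def)
  from norm_add_Pythagorean[OF this] show ?thesis
    by (simp add: infdist_eq_norm_oproj[OF V])
qed

lemma projmat_entry:
  fixes V :: "(real^'r) set"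
  assumes V: "subspace V"
  shows "projmat V $ i $ j =
    ((norm (oproj V (axis i 1 + axis j 1)))\<^sup>2 - (norm (oproj V (axis i 1)))\<^sup>2 - (norm (oproj V (axis j 1)))\<^sup>2) / 2"
proof -
  have "projmat V $ i $ j = axis i 1 \<bullet> oproj V (axis j 1)"
    by (simp add: projmat_def inner_axis')
  also have "\<dots> = oproj V (axis i 1) \<bullet> oproj V (axis j 1)"
    by (rule inner_oproj[OF V])
  finally show ?thesis
    by (simp add: oproj_add[OF V] power2_norm_eq_inner inner_add_left inner_add_right inner_commute)
qed

lemma subspace_colspace: "subspace (colspace (X::real^'c^'r))"
  unfolding colspace_def
  using linear_subspace_image[OF matrix_vector_mul_linear subspace_UNIV] by simp

lemma mem_colspace_iff_infdist: "v \<in> colspace (X::real^'c^'r) \<longleftrightarrow> infdist v (colspace X) = 0"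
  using in_closed_iff_infdist_zero[OF closed_subspace[OF subspace_colspace]]
    subspace_0[OF subspace_colspace] by blast

lemma colspace_subset_iff:
  fixes X :: "real^'c^'r"
  assumes V: "subspace V"
  shows "colspace X \<subseteq> V \<longleftrightarrow> (\<forall>i. X *v axis i 1 \<in> V)"
proof
  assume cols: "\<forall>i. X *v axis i 1 \<in> V"
  show "colspace X \<subseteq> V"
    unfolding colspace_def
  proof (rule image_subsetI)
    fix x
    have "X *v x = (\<Sum>i\<in>UNIV. (x $ i) *\<^sub>R column i X)"
      by (simp add: matrix_mult_sum scalar_mult_eq_scaleR)
    also have "\<dots> = (\<Sum>i\<in>UNIV. (x $ i) *\<^sub>R (X *v axis i 1))"
      by (simp add: matrix_vector_mult_basis)
    also have "\<dots> \<in> V"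
      using cols V by (intro subspace_sum subspace_scale) auto
    finally show "X *v x \<in> V" .
  qed
qed (auto simp: colspace_def)

lemma colspace_eq_iff_infdist:
  fixes X :: "real^'c^'r" and Y :: "real^'d^'r"
  shows "colspace X = colspace Y \<longleftrightarrow>
    (\<forall>i. infdist (X *v axis i 1) (colspace Y) = 0) \<and> (\<forall>i. infdist (Y *v axis i 1) (colspace X) = 0)"
  by (auto simp: colspace_subset_iff[OF subspace_colspace] mem_colspace_iff_infdist[symmetric] set_eq_subset)

lemma sum_matrix_vector_mult: "finite K \<Longrightarrow> (\<Sum>k\<in>K. (F k :: real^'c^'r)) *v x = (\<Sum>k\<in>K. F k *v x)"
  by (induction K rule: finite_induct) (auto simp: matrix_vector_mult_add_rdistrib)

text \<open>This turns the covering condition into a condition on a single matrix depending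
  continuously on the data.\<close>

lemma span_colspace_eq_colspace_gram_sum:
  fixes X :: "nat \<Rightarrow> real^'c^'r"
  assumes K: "finite K"
  shows "span (\<Union>k\<in>K. colspace (X k)) = colspace (\<Sum>k\<in>K. X k ** transpose (X k))"
    (is "_ = colspace ?Z")
proof
  let ?R = "colspace ?Z"
  have R: "subspace ?R" by (rule subspace_colspace)
  show "span (\<Union>k\<in>K. colspace (X k)) \<subseteq> ?R"
  proof (rule span_minimal[OF _ R], intro UN_least subsetI)
    fix k u assume k: "k \<in> K" and "u \<in> colspace (X k)"
    then obtain y where u: "u = X k *v y" by (auto simp: colspace_def)
    let ?v = "u - oproj ?R u"
    have "?Z *v ?v \<in> ?R" by (simp add: colspace_def)
    then have "0 = ?v \<bullet> (?Z *v ?v)" using oproj_orthogonal[OF R] by auto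
    also have "\<dots> = (\<Sum>j\<in>K. ?v \<bullet> (X j *v (transpose (X j) *v ?v)))"
      by (simp add: sum_matrix_vector_mult[OF K] inner_sum_right matrix_vector_mul_assoc
          del: transpose_matrix_vector)
    also have "\<dots> = (\<Sum>j\<in>K. (transpose (X j) *v ?v) \<bullet> (transpose (X j) *v ?v))"
      by (simp only: dot_lmul_matrix[symmetric] transpose_matrix_vector)
    finally have "transpose (X k) *v ?v = 0"
      using K k by (subst (asm) eq_commute, subst (asm) sum_nonneg_eq_0_iff) auto
    then have "?v \<bullet> u = 0" by (simp add: u dot_lmul_matrix[symmetric])
    moreover have "?v \<bullet> oproj ?R u = 0" using oproj_orthogonal[OF R oproj_mem[OF R]] .
    ultimately have "?v \<bullet> ?v = 0" by (simp add: inner_diff_right)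
    then show "u \<in> ?R" using oproj_mem[OF R, of u] by simp
  qed
  show "?R \<subseteq> span (\<Union>k\<in>K. colspace (X k))"
  proof
    fix u assume "u \<in> ?R"
    then obtain x where "u = ?Z *v x" by (auto simp: colspace_def)
    then have "u = (\<Sum>k\<in>K. X k *v (transpose (X k) *v x))"
      by (simp add: sum_matrix_vector_mult[OF K] matrix_vector_mul_assoc del: transpose_matrix_vector)
    also have "\<dots> \<in> span (\<Union>k\<in>K. colspace (X k))"
      by (intro span_sum span_base) (auto simp: colspace_def)
    finally show "u \<in> span (\<Union>k\<in>K. colspace (X k))" .
  qed
qed

lemma covers_iff_gram:
  "covers M W t j \<longleftrightarrow> colspace (\<Sum>k\<in>{t+1..j}. M k ** transpose (M k)) = colspace W"
  unfolding covers_def by (simp add: span_colspace_eq_colspace_gram_sum)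

section \<open>Measurability of matrix-valued maps\<close>

lemma borel_measurable_vec_lambda:
  fixes g :: "'i::finite \<Rightarrow> 'a \<Rightarrow> 'b::euclidean_space"
  assumes "\<And>i. g i \<in> borel_measurable N"
  shows "(\<lambda>x. \<chi> i. g i x) \<in> borel_measurable N"
proof (subst borel_measurable_euclidean_space, intro ballI)
  fix b :: "'b^'i" assume "b \<in> Basis"
  then obtain i u where b: "b = axis i u" "u \<in> Basis" unfolding Basis_vec_def by auto
  have "(\<lambda>x. (\<chi> i. g i x) \<bullet> b) = (\<lambda>x. g i x \<bullet> u)" by (simp add: b inner_axis)
  also have "\<dots> \<in> borel_measurable N" using assms by (intro borel_measurable_inner) auto
  finally show "(\<lambda>x. (\<chi> i. g i x) \<bullet> b) \<in> borel_measurable N" .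
qed

lemma borel_measurable_matrix_matrix_mult:
  fixes f :: "'a \<Rightarrow> real^'c^'r" and g :: "'a \<Rightarrow> real^'d^'c"
  assumes "f \<in> borel_measurable N" "g \<in> borel_measurable N"
  shows "(\<lambda>z. f z ** g z) \<in> borel_measurable N"
proof -
  have "continuous_on UNIV (\<lambda>p::(real^'c^'r) \<times> (real^'d^'c). fst p ** snd p)"
    unfolding matrix_matrix_mult_def by (intro continuous_intros)
  from borel_measurable_continuous_Pair[OF assms this] show ?thesis by simp
qed

lemma borel_measurable_matrix_vector_mult:
  fixes f :: "'a \<Rightarrow> real^'c^'r" and g :: "'a \<Rightarrow> real^'c"
  assumes "f \<in> borel_measurable N" "g \<in> borel_measurable N"
  shows "(\<lambda>z. f z *v g z) \<in> borel_measurable N"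
proof -
  have "continuous_on UNIV (\<lambda>p::(real^'c^'r) \<times> (real^'c). fst p *v snd p)"
    unfolding matrix_vector_mult_def by (intro continuous_intros)
  from borel_measurable_continuous_Pair[OF assms this] show ?thesis by simp
qed

lemma borel_measurable_transpose:
  fixes f :: "'a \<Rightarrow> real^'c^'r"
  assumes "f \<in> borel_measurable N"
  shows "(\<lambda>z. transpose (f z)) \<in> borel_measurable N"
proof -
  have "continuous_on UNIV (transpose :: real^'c^'r \<Rightarrow> real^'r^'c)"
    unfolding transpose_def by (intro continuous_intros)
  from measurable_compose[OF assms borel_measurable_continuous_onI[OF this]] show ?thesis by simp
qed

lemma infdist_colspace_less_iff:
  "infdist v (colspace (X::real^'c^'r)) < a \<longleftrightarrow> (\<exists>y. dist v (X *v y) < a)"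
proof -
  have ne: "colspace X \<noteq> {}" by (simp add: colspace_def)
  have bdd: "bdd_below ((\<lambda>w. dist v w) ` colspace X)" by (rule bdd_belowI[of _ 0]) auto
  show ?thesis unfolding infdist_notempty[OF ne] cINF_less_iff[OF ne bdd]
    by (auto simp: colspace_def)
qed

text \<open>The distance to a column space is upper semicontinuous jointly in the matrix and the
  point, being an infimum of continuous functions.\<close>

lemma borel_measurable_infdist_colspace:
  fixes X :: "'a \<Rightarrow> real^'c^'r" and v :: "'a \<Rightarrow> real^'r"
  assumes X: "X \<in> borel_measurable N" and v: "v \<in> borel_measurable N"
  shows "(\<lambda>z. infdist (v z) (colspace (X z))) \<in> borel_measurable N"
proof -
  let ?d = "\<lambda>p::(real^'c^'r) \<times> (real^'r). infdist (snd p) (colspace (fst p))"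
  have "?d \<in> borel_measurable borel"
  proof (subst borel_measurable_iff_less, intro allI)
    fix a
    have "{p \<in> space borel. ?d p < a} = (\<Union>y. {p. dist (snd p) (fst p *v y) < a})"
      by (auto simp: infdist_colspace_less_iff)
    also have "open \<dots>"
      unfolding matrix_vector_mult_def by (intro open_UN ballI open_Collect_less continuous_intros)
    finally show "{p \<in> space borel. ?d p < a} \<in> sets borel" by simp
  qed
  moreover have "(\<lambda>z. (X z, v z)) \<in> borel_measurable N"
    using measurable_Pair[OF X v] by (simp add: borel_prod)
  ultimately show ?thesis using measurable_compose[of "\<lambda>z. (X z, v z)" N borel ?d] by simp
qed

lemma pred_colspace_eq:
  fixes X :: "'a \<Rightarrow> real^'c^'r" and Y :: "'a \<Rightarrow> real^'d^'r"
  assumes X: "X \<in> borel_measurable N" and Y: "Y \<in> borel_measurable N"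
  shows "Measurable.pred N (\<lambda>z. colspace (X z) = colspace (Y z))"
proof -
  have "Measurable.pred N (\<lambda>z. infdist (X z *v axis i 1) (colspace (Y z)) = 0)" for i
    using borel_measurable_infdist_colspace[OF Y borel_measurable_matrix_vector_mult[OF X borel_measurable_const]]
    by measurable
  moreover have "Measurable.pred N (\<lambda>z. infdist (Y z *v axis i 1) (colspace (X z)) = 0)" for i
    using borel_measurable_infdist_colspace[OF X borel_measurable_matrix_vector_mult[OF Y borel_measurable_const]]
    by measurable
  ultimately show ?thesis
    unfolding colspace_eq_iff_infdist by (intro pred_intros_logic pred_intros_finite(3)) auto
qed

lemma borel_measurable_projmat_colspace:
  fixes X :: "'a \<Rightarrow> real^'c^'r"
  assumes X: "X \<in> borel_measurable N"
  shows "(\<lambda>z. projmat (colspace (X z))) \<in> borel_measurable N"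
proof -
  let ?q = "\<lambda>z w. (norm (oproj (colspace (X z)) w))\<^sup>2"
  have q: "(\<lambda>z. ?q z w) \<in> borel_measurable N" for w
    unfolding norm_oproj_sq[OF subspace_colspace]
    by (intro borel_measurable_diff borel_measurable_power borel_measurable_const
        borel_measurable_infdist_colspace[OF X])
  have "(\<lambda>z. projmat (colspace (X z)))
      = (\<lambda>z. \<chi> i j. (?q z (axis i 1 + axis j 1) - ?q z (axis i 1) - ?q z (axis j 1)) / 2)"
    by (auto simp: fun_eq_iff vec_eq_iff projmat_entry[OF subspace_colspace])
  also have "\<dots> \<in> borel_measurable N"
    by (intro borel_measurable_vec_lambda borel_measurable_divide borel_measurable_diff
        borel_measurable_const q)
  finally show ?thesis .
qed

lemma borel_measurable_opnorm_on:
  fixes V :: "(real^'r) set"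
  assumes "0 \<in> V"
  shows "opnorm_on V \<in> borel_measurable borel"
proof (subst borel_measurable_iff_greater, intro allI)
  fix a
  let ?B = "{x. x \<in> V \<and> norm x \<le> 1}"
  have "a < opnorm_on V T \<longleftrightarrow> (\<exists>x\<in>?B. a < norm (T *v x))" for T
  proof -
    obtain K where K: "\<And>x. norm (T *v x) \<le> norm x * K" and "K > 0"
      using bounded_linear.pos_bounded[OF matrix_vector_mul_bounded_linear[of T]] by blast
    have "norm (T *v x) \<le> K" if "norm x \<le> 1" for x
    proof -
      have "norm x * K \<le> K" using mult_left_le_one_le[of K "norm x"] that \<open>K > 0\<close> by simp
      then show ?thesis using K[of x] by linarith
    qed
    then have "bdd_above {norm (T *v x) | x. x \<in> V \<and> norm x \<le> 1}"
      by (intro bdd_aboveI[of _ K]) auto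
    then show ?thesis
      unfolding opnorm_on_def using assms by (subst less_cSup_iff) auto
  qed
  then have "{T \<in> space borel. a < opnorm_on V T} = (\<Union>x\<in>?B. {T. a < norm (T *v x)})"
    by auto
  also have "open \<dots>"
    unfolding matrix_vector_mult_def by (intro open_UN ballI open_Collect_less continuous_intros)
  finally show "{T \<in> space borel. a < opnorm_on V T} \<in> sets borel" by simp
qed

section \<open>The stopping times\<close>

definition next_cover :: "(nat \<Rightarrow> real^'c^'r) \<Rightarrow> real^'d^'r \<Rightarrow> nat \<Rightarrow> enat" where
  "next_cover M W t = (if \<exists>j>t. covers M W t j then enat (LEAST j. t < j \<and> covers M W t j) else \<infinity>)"

lemma tau_Suc_next_cover:
  "tau M W (Suc l) = (case tau M W l of \<infinity> \<Rightarrow> \<infinity> | enat t \<Rightarrow> next_cover M W t)"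
  by (simp add: next_cover_def split: enat.split)

declare tau.simps(2)[simp del]

lemma tau_one: "tau M W 1 = next_cover M W 0"
  using tau_Suc_next_cover[of M W 0] by (simp add: zero_enat_def)

lemma tau_finite_le: "tau M W j \<noteq> \<infinity> \<Longrightarrow> i \<le> j \<Longrightarrow> tau M W i \<noteq> \<infinity>"
proof (induction j)
  case (Suc j)
  then show ?case by (cases "i = Suc j") (auto simp: tau_Suc_next_cover split: enat.splits)
qed simp

lemma next_cover_eq_enat_iff:
  "next_cover M W t = enat d \<longleftrightarrow> t < d \<and> covers M W t d \<and> (\<forall>j\<in>{t<..<d}. \<not> covers M W t j)"
proof
  assume d: "next_cover M W t = enat d"
  then have ex: "\<exists>j>t. covers M W t j" by (auto simp: next_cover_def split: if_splits)
  with d have d_Least: "d = (LEAST j. t < j \<and> covers M W t j)" by (simp add: next_cover_def)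
  have "t < d \<and> covers M W t d" unfolding d_Least using ex by (metis (mono_tags, lifting) LeastI)
  moreover have "\<not> covers M W t j" if "j \<in> {t<..<d}" for j
    using not_less_Least[of j "\<lambda>j. t < j \<and> covers M W t j"] that d_Least by auto
  ultimately show "t < d \<and> covers M W t d \<and> (\<forall>j\<in>{t<..<d}. \<not> covers M W t j)" by blast
next
  assume d: "t < d \<and> covers M W t d \<and> (\<forall>j\<in>{t<..<d}. \<not> covers M W t j)"
  then have "(LEAST j. t < j \<and> covers M W t j) = d"
    by (intro Least_equality) (auto simp: not_less[symmetric])
  with d show "next_cover M W t = enat d" by (auto simp: next_cover_def)
qed

lemma covers_cong:
  "(\<And>k. t + 1 \<le> k \<Longrightarrow> k \<le> j \<Longrightarrow> M k = M' k) \<Longrightarrow> covers M W t j = covers M' W t j"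
  unfolding covers_def by (metis (no_types, lifting) atLeastAtMost_iff SUP_cong)

lemma covers_shift: "covers M W (t + a) (t + b) = covers (\<lambda>k. M (t + k)) W a b"
proof -
  have "{t + a + 1..t + b} = (+) t ` {a + 1..b}" by (simp add: ac_simps)
  then have "(\<Union>k\<in>{t + a + 1..t + b}. colspace (M k)) = (\<Union>k\<in>{a + 1..b}. colspace (M (t + k)))"
    by (simp only: image_image)
  then show ?thesis by (simp add: covers_def)
qed

lemma not_covers_shift:
  assumes "t + a < j" "\<not> covers (\<lambda>k. M (t + k)) W a (j - t)"
  shows "\<not> covers M W (t + a) j"
proof -
  have "t + (j - t) = j" using assms(1) by simp
  then show ?thesis using assms(2) covers_shift[of M W t a "j - t"] by simp
qed

lemma next_cover_shift: "next_cover M W (t + a) = enat t + next_cover (\<lambda>k. M (t + k)) W a"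
proof (cases "next_cover (\<lambda>k. M (t + k)) W a")
  case (enat d)
  then have d: "a < d" "covers (\<lambda>k. M (t + k)) W a d"
    "\<And>j. a < j \<Longrightarrow> j < d \<Longrightarrow> \<not> covers (\<lambda>k. M (t + k)) W a j"
    by (auto simp: next_cover_eq_enat_iff)
  have "\<not> covers M W (t + a) j" if "t + a < j" "j < t + d" for j
    using that d(3)[of "j - t"] by (intro not_covers_shift) auto
  then have "next_cover M W (t + a) = enat (t + d)"
    using d covers_shift[of M W t a d] by (auto simp: next_cover_eq_enat_iff)
  then show ?thesis using enat by simp
next
  case infinity
  then have "\<not> covers M W (t + a) j" if "t + a < j" for j
    using that by (intro not_covers_shift) (auto simp: next_cover_def split: if_splits)
  then show ?thesis using infinity by (auto simp: next_cover_def)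
qed

lemma tau_Suc_shift:
  assumes "tau M W 1 = enat t"
  shows "tau M W (Suc j) = enat t + tau (\<lambda>k. M (t + k)) W j"
proof (induction j)
  case 0 with assms show ?case by simp
next
  case (Suc j)
  then show ?case
    by (cases "tau (\<lambda>k. M (t + k)) W j")
      (simp_all add: tau_Suc_next_cover[of M W "Suc j"] tau_Suc_next_cover[of "\<lambda>k. M (t + k)" W j]
        next_cover_shift)
qed

lemma mprod_shift: "mprod f (t + a) c = mprod (\<lambda>k. f (t + k)) a c"
  by (induction c) (simp_all add: add.assoc)

lemma mprod_cong: "(\<And>k. a \<le> k \<Longrightarrow> k < a + c \<Longrightarrow> f k = g k) \<Longrightarrow> mprod f a c = mprod g a c"
  by (induction c) auto

lemma gamma_Suc_shift:
  assumes "tau M W 1 = enat t"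
  shows "gamma M W (Suc (Suc j)) = gamma (\<lambda>k. M (t + k)) W (Suc j)"
proof (cases "tau (\<lambda>k. M (t + k)) W j"; cases "tau (\<lambda>k. M (t + k)) W (Suc j)")
  fix a b assume a: "tau (\<lambda>k. M (t + k)) W j = enat a" and b: "tau (\<lambda>k. M (t + k)) W (Suc j) = enat b"
  have "mprod (\<lambda>k. mat 1 - projmat (colspace (M k))) (t + (a + 1)) (t + b - (t + a))
      = mprod (\<lambda>k. mat 1 - projmat (colspace (M (t + k)))) (a + 1) (b - a)"
    using mprod_shift[of "\<lambda>k. mat 1 - projmat (colspace (M k))" t "a + 1" "b - a"] by simp
  then show ?thesis
    using a b tau_Suc_shift[OF assms, of j] tau_Suc_shift[OF assms, of "Suc j"]
    by (simp add: gamma_def add.assoc)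
qed (use tau_Suc_shift[OF assms, of j] tau_Suc_shift[OF assms, of "Suc j"] in \<open>simp_all add: gamma_def\<close>)

lemma tau_cong:
  assumes "\<And>k. 1 \<le> k \<Longrightarrow> M k = M' k"
  shows "tau M W j = tau M' W j"
proof (induction j)
  case (Suc j)
  have "covers M W t i = covers M' W t i" for t i
    using assms by (intro covers_cong) auto
  then have "next_cover M W t = next_cover M' W t" for t
    by (simp add: next_cover_def)
  with Suc.IH show ?case by (simp add: tau_Suc_next_cover split: enat.split)
qed simp

lemma gamma_cong:
  assumes "\<And>k. 1 \<le> k \<Longrightarrow> M k = M' k"
  shows "gamma M W j = gamma M' W j"
proof -
  have "mprod (\<lambda>k. mat 1 - projmat (colspace (M k))) (a + 1) c
      = mprod (\<lambda>k. mat 1 - projmat (colspace (M' k))) (a + 1) c" for a c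
    using assms by (intro mprod_cong) auto
  moreover have "tau M W i = tau M' W i" for i by (rule tau_cong[OF assms])
  ultimately show ?thesis unfolding gamma_def by (simp only:)
qed

lemma tau_one_gamma_one_local:
  assumes tau: "tau M W 1 = enat d" and eq: "\<And>k. 1 \<le> k \<Longrightarrow> k \<le> d \<Longrightarrow> M' k = M k"
  shows "tau M' W 1 = enat d" and "gamma M' W 1 = gamma M W 1"
proof -
  have "covers M' W 0 j = covers M W 0 j" if "j \<le> d" for j
    using that eq by (intro covers_cong) auto
  then show tau': "tau M' W 1 = enat d"
    using tau unfolding tau_one next_cover_eq_enat_iff by auto
  have "mprod (\<lambda>k. mat 1 - projmat (colspace (M' k))) 1 d = mprod (\<lambda>k. mat 1 - projmat (colspace (M k))) 1 d"
    using eq by (intro mprod_cong) auto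
  then show "gamma M' W 1 = gamma M W 1"
    using tau tau' by (simp add: gamma_def zero_enat_def)
qed

lemma pred_covers:
  fixes X :: "nat \<Rightarrow> 'a \<Rightarrow> real^'c^'r" and W :: "real^'d^'r"
  assumes X: "\<And>k. X k \<in> borel_measurable N"
  shows "Measurable.pred N (\<lambda>z. covers (\<lambda>k. X k z) W t j)"
  unfolding covers_iff_gram
  by (intro pred_colspace_eq borel_measurable_sum borel_measurable_matrix_matrix_mult
      borel_measurable_transpose X borel_measurable_const)

lemma measurable_next_cover:
  fixes X :: "nat \<Rightarrow> 'a \<Rightarrow> real^'c^'r" and W :: "real^'d^'r"
  assumes X: "\<And>k. X k \<in> borel_measurable N"
  shows "(\<lambda>z. next_cover (\<lambda>k. X k z) W t) \<in> N \<rightarrow>\<^sub>M count_space UNIV"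
  unfolding measurable_count_space_eq2_countable
proof (intro conjI ballI)
  fix e :: enat
  have [measurable]: "Measurable.pred N (\<lambda>z. covers (\<lambda>k. X k z) W t j)" for j
    by (rule pred_covers[OF X])
  show "(\<lambda>z. next_cover (\<lambda>k. X k z) W t) -` {e} \<inter> space N \<in> sets N"
  proof (cases e)
    case (enat d)
    have "(\<lambda>z. next_cover (\<lambda>k. X k z) W t) -` {e} \<inter> space N
        = {z \<in> space N. t < d \<and> covers (\<lambda>k. X k z) W t d \<and> (\<forall>j\<in>{t<..<d}. \<not> covers (\<lambda>k. X k z) W t j)}"
      by (auto simp: enat next_cover_eq_enat_iff)
    then show ?thesis by simp
  next
    case infinity
    have "(\<lambda>z. next_cover (\<lambda>k. X k z) W t) -` {e} \<inter> space N
        = {z \<in> space N. \<forall>j\<in>{t<..}. \<not> covers (\<lambda>k. X k z) W t j}"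
      by (auto simp: infinity next_cover_def split: if_splits)
    then show ?thesis by simp
  qed
qed simp

lemma measurable_tau:
  fixes X :: "nat \<Rightarrow> 'a \<Rightarrow> real^'c^'r" and W :: "real^'d^'r"
  assumes X: "\<And>k. X k \<in> borel_measurable N"
  shows "(\<lambda>z. tau (\<lambda>k. X k z) W j) \<in> N \<rightarrow>\<^sub>M count_space UNIV"
proof (induction j)
  case (Suc j)
  have "(\<lambda>z. case e of enat t \<Rightarrow> next_cover (\<lambda>k. X k z) W t | \<infinity> \<Rightarrow> \<infinity>) \<in> N \<rightarrow>\<^sub>M count_space UNIV"
    for e by (cases e) (simp_all add: measurable_next_cover[OF X])
  from measurable_compose_countable[OF this Suc.IH] show ?case by (simp add: tau_Suc_next_cover)
qed simp

lemma measurable_tau_diff: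
  fixes X :: "nat \<Rightarrow> 'a \<Rightarrow> real^'c^'r" and W :: "real^'d^'r"
  assumes X: "\<And>k. X k \<in> borel_measurable N"
  shows "(\<lambda>z. tau (\<lambda>k. X k z) W j - tau (\<lambda>k. X k z) W i) \<in> N \<rightarrow>\<^sub>M count_space UNIV"
  using measurable_tau[OF X] by measurable

lemma borel_measurable_gamma:
  fixes X :: "nat \<Rightarrow> 'a \<Rightarrow> real^'c^'r" and W :: "real^'d^'r"
  assumes X: "\<And>k. X k \<in> borel_measurable N"
  shows "(\<lambda>z. gamma (\<lambda>k. X k z) W j) \<in> borel_measurable N"
proof -
  have mprod: "(\<lambda>z. mprod (\<lambda>k. mat 1 - projmat (colspace (X k z))) a c) \<in> borel_measurable N" for a c
    by (induction c) (simp_all add: borel_measurable_matrix_matrix_mult borel_measurable_diff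
        borel_measurable_projmat_colspace[OF X])
  let ?g = "\<lambda>p z. case p of (enat a, enat b) \<Rightarrow>
    opnorm_on (colspace W) (mprod (\<lambda>k. mat 1 - projmat (colspace (X k z))) (a + 1) (b - a)) | _ \<Rightarrow> 0"
  have "(\<lambda>z. ?g (a, b) z) \<in> borel_measurable N" for a b
    using measurable_compose[OF mprod borel_measurable_opnorm_on[OF subspace_0[OF subspace_colspace]]]
    by (cases a; cases b) simp_all
  then have "(\<lambda>z. ?g p z) \<in> borel_measurable N" for p
    by (cases p) (simp only:)
  moreover have "(\<lambda>z. (tau (\<lambda>k. X k z) W (j - 1), tau (\<lambda>k. X k z) W j)) \<in> N \<rightarrow>\<^sub>M count_space UNIV"
    using measurable_Pair[OF measurable_tau[OF X] measurable_tau[OF X]]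
    by (simp add: pair_measure_countable)
  ultimately show ?thesis
    unfolding gamma_def by (rule measurable_compose_countable)
qed

section \<open>Regenerative statistics of sequences\<close>

lemma atLeastAtMost_one_Suc_eq_insert: "{1..Suc n} = insert 1 (Suc ` {1..n})"
  using atLeastAtMost_insertL[of 1 "Suc n"] by simp

locale regenerative = sequence_space M for M :: "'a measure" +
  fixes T :: "(nat \<Rightarrow> 'a) \<Rightarrow> enat" and \<Phi> :: "nat \<Rightarrow> (nat \<Rightarrow> 'a) \<Rightarrow> 'b" and N :: "'b measure"
  assumes measurable_T[measurable]: "T \<in> S \<rightarrow>\<^sub>M count_space UNIV"
    and measurable_\<Phi>[measurable]: "\<And>j. \<Phi> j \<in> S \<rightarrow>\<^sub>M N"
    and T_comb_seq: "\<And>d \<omega> \<omega>'. T (comb_seq d \<omega> \<omega>') = enat d \<longleftrightarrow> T \<omega> = enat d"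
    and \<Phi>_one_comb_seq: "\<And>d \<omega> \<omega>'. T \<omega> = enat d \<Longrightarrow> \<Phi> 1 (comb_seq d \<omega> \<omega>') = \<Phi> 1 \<omega>"
    and \<Phi>_Suc_shift: "\<And>d \<omega> j. T \<omega> = enat d \<Longrightarrow> 1 \<le> j \<Longrightarrow> \<Phi> (Suc j) \<omega> = \<Phi> j (\<lambda>k. \<omega> (d + k))"
begin

text \<open>The strong Markov property at \<open>T\<close>.\<close>

lemma emeasure_split_at_T:
  assumes [measurable]: "B \<in> sets N" "\<And>j. A j \<in> sets N"
  shows "emeasure S {\<omega> \<in> space S. T \<omega> = enat d \<and> \<Phi> 1 \<omega> \<in> B \<and> (\<forall>j\<in>{1..n}. \<Phi> (Suc j) \<omega> \<in> A j)}
    = emeasure S {\<omega> \<in> space S. T \<omega> = enat d \<and> \<Phi> 1 \<omega> \<in> B} * emeasure S {\<omega> \<in> space S. \<forall>j\<in>{1..n}. \<Phi> j \<omega> \<in> A j}"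
    (is "emeasure S ?E = emeasure S ?B * emeasure S ?C")
proof -
  let ?c = "\<lambda>(\<omega>, \<omega>'). comb_seq d \<omega> \<omega>'"
  have c: "?c \<in> S \<Otimes>\<^sub>M S \<rightarrow>\<^sub>M S" by (rule measurable_comb_seq)
  have "comb_seq d \<omega> \<omega>' \<in> ?E \<longleftrightarrow> \<omega> \<in> ?B \<and> \<omega>' \<in> ?C"
    if "\<omega> \<in> space S" "\<omega>' \<in> space S" for \<omega> \<omega>'
  proof (cases "T \<omega> = enat d")
    case True
    have "\<Phi> (Suc j) (comb_seq d \<omega> \<omega>') = \<Phi> j \<omega>'" if "1 \<le> j" for j
      using \<Phi>_Suc_shift[of "comb_seq d \<omega> \<omega>'" d j] True that
      by (simp add: T_comb_seq comb_seq_add add.commute[of d])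
    moreover have "\<Phi> 1 (comb_seq d \<omega> \<omega>') = \<Phi> 1 \<omega>" using True by (rule \<Phi>_one_comb_seq)
    ultimately show ?thesis
      using True that measurable_space[OF c, of "(\<omega>, \<omega>')"]
      by (auto simp: T_comb_seq space_pair_measure)
  qed (simp add: T_comb_seq)
  then have "?c -` ?E \<inter> space (S \<Otimes>\<^sub>M S) = ?B \<times> ?C"
    by (auto simp: space_pair_measure)
  moreover have "emeasure S ?E = emeasure (S \<Otimes>\<^sub>M S) (?c -` ?E \<inter> space (S \<Otimes>\<^sub>M S))"
    using emeasure_distr[OF c, of ?E] by (simp add: PiM_comb_seq)
  ultimately show ?thesis
    by (simp add: P.emeasure_pair_measure_Times)
qed

lemma emeasure_blocks_prod:
  assumes "2 \<le> n \<Longrightarrow> AE \<omega> in S. T \<omega> \<noteq> \<infinity>" and "\<And>j. A j \<in> sets N"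
  shows "emeasure S {\<omega> \<in> space S. \<forall>j\<in>{1..n}. \<Phi> j \<omega> \<in> A j}
    = (\<Prod>j\<in>{1..n}. emeasure S {\<omega> \<in> space S. \<Phi> 1 \<omega> \<in> A j})"
  using assms
proof (induction n arbitrary: A)
  case (Suc n)
  note [measurable] = Suc.prems(2)
  show ?case
  proof (cases "n = 0")
    case False
    then have fin: "AE \<omega> in S. T \<omega> \<noteq> \<infinity>" using Suc.prems(1) by simp
    let ?B = "\<lambda>d. {\<omega> \<in> space S. T \<omega> = enat d \<and> \<Phi> 1 \<omega> \<in> A 1}"
    let ?C = "{\<omega> \<in> space S. \<forall>j\<in>{1..n}. \<Phi> j \<omega> \<in> A (Suc j)}"
    let ?E = "\<lambda>d. {\<omega> \<in> space S. T \<omega> = enat d \<and> \<Phi> 1 \<omega> \<in> A 1 \<and> (\<forall>j\<in>{1..n}. \<Phi> (Suc j) \<omega> \<in> A (Suc j))}"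
    have "AE \<omega> in S. \<omega> \<in> {\<omega> \<in> space S. \<forall>j\<in>{1..Suc n}. \<Phi> j \<omega> \<in> A j} \<longleftrightarrow> \<omega> \<in> (\<Union>d. ?E d)"
      using fin by eventually_elim
        (subst atLeastAtMost_one_Suc_eq_insert, auto simp del: image_Suc_atLeastAtMost)
    then have "emeasure S {\<omega> \<in> space S. \<forall>j\<in>{1..Suc n}. \<Phi> j \<omega> \<in> A j} = emeasure S (\<Union>d. ?E d)"
      by (intro emeasure_eq_AE) measurable
    also have "\<dots> = (\<Sum>d. emeasure S (?E d))"
      by (intro suminf_emeasure[symmetric]) (auto simp: disjoint_family_on_def)
    also have "\<dots> = (\<Sum>d. emeasure S (?B d) * emeasure S ?C)"
      by (intro suminf_cong emeasure_split_at_T) measurable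
    also have "\<dots> = (\<Sum>d. emeasure S (?B d)) * emeasure S ?C"
      by simp
    also have "(\<Sum>d. emeasure S (?B d)) = emeasure S (\<Union>d. ?B d)"
      by (intro suminf_emeasure) (auto simp: disjoint_family_on_def)
    also have "\<dots> = emeasure S {\<omega> \<in> space S. \<Phi> 1 \<omega> \<in> A 1}"
    proof (intro emeasure_eq_AE)
      show "AE \<omega> in S. \<omega> \<in> (\<Union>d. ?B d) \<longleftrightarrow> \<omega> \<in> {\<omega> \<in> space S. \<Phi> 1 \<omega> \<in> A 1}"
        using fin by eventually_elim auto
    qed measurable
    also have "emeasure S ?C = (\<Prod>j\<in>{1..n}. emeasure S {\<omega> \<in> space S. \<Phi> 1 \<omega> \<in> A (Suc j)})"
      using Suc.IH[of "\<lambda>j. A (Suc j)"] fin by simp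
    finally show ?thesis
      by (subst atLeastAtMost_one_Suc_eq_insert)
        (simp add: prod.reindex image_iff del: image_Suc_atLeastAtMost)
  qed simp
qed (simp add: P.emeasure_space_1)

end

section \<open>Independent identically distributed families\<close>

context prob_space
begin

lemma indep_identically_distributed_if_prod:
  fixes Y :: "'i \<Rightarrow> 'a \<Rightarrow> 'b"
  assumes I: "finite I" "i\<^sub>0 \<in> I" and Y: "\<And>i. random_variable N (Y i)"
    and prod: "\<And>A. (\<And>i. A i \<in> sets N) \<Longrightarrow>
      emeasure M {\<omega> \<in> space M. \<forall>i\<in>I. Y i \<omega> \<in> A i} = (\<Prod>i\<in>I. emeasure M {\<omega> \<in> space M. Y i\<^sub>0 \<omega> \<in> A i})"
  shows "indep_vars (\<lambda>_. N) Y I \<and> (\<forall>i\<in>I. distr M N (Y i) = distr M N (Y i\<^sub>0))"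
proof -
  have [measurable]: "\<And>i. Y i \<in> M \<rightarrow>\<^sub>M N" by (rule Y)
  have same: "emeasure M {\<omega> \<in> space M. Y i \<omega> \<in> B} = emeasure M {\<omega> \<in> space M. Y i\<^sub>0 \<omega> \<in> B}"
    if i: "i \<in> I" and B: "B \<in> sets N" for i B
  proof -
    let ?A = "\<lambda>k. if k = i then B else space N"
    have "emeasure M {\<omega> \<in> space M. Y i \<omega> \<in> B} = emeasure M {\<omega> \<in> space M. \<forall>k\<in>I. Y k \<omega> \<in> ?A k}"
      using i measurable_space[OF Y] by (intro arg_cong[where f = "emeasure M"]) auto
    also have "\<dots> = (\<Prod>k\<in>I. emeasure M {\<omega> \<in> space M. Y i\<^sub>0 \<omega> \<in> ?A k})"
      using B by (intro prod) auto
    also have "\<dots> = (\<Prod>k\<in>I. if k = i then emeasure M {\<omega> \<in> space M. Y i\<^sub>0 \<omega> \<in> B} else 1)"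
    proof (intro prod.cong)
      have "{\<omega> \<in> space M. Y i\<^sub>0 \<omega> \<in> space N} = space M" using measurable_space[OF Y] by auto
      then show "emeasure M {\<omega> \<in> space M. Y i\<^sub>0 \<omega> \<in> ?A k}
          = (if k = i then emeasure M {\<omega> \<in> space M. Y i\<^sub>0 \<omega> \<in> B} else 1)" for k
        by (simp add: emeasure_space_1)
    qed simp
    finally show ?thesis using I i by (simp add: prod.delta)
  qed
  have "indep_vars (\<lambda>_. N) Y I"
  proof (subst indep_vars_finite[where E = "\<lambda>_. sets N"])
    show "\<forall>A\<in>I \<rightarrow> sets N. prob (\<Inter>j\<in>I. Y j -` A j \<inter> space M) = (\<Prod>j\<in>I. prob (Y j -` A j \<inter> space M))"
    proof
      fix A assume A: "A \<in> I \<rightarrow> sets N"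
      have "(\<Inter>j\<in>I. Y j -` A j \<inter> space M) = {\<omega> \<in> space M. \<forall>j\<in>I. Y j \<omega> \<in> A j}"
        using I by auto
      then have "ennreal (prob (\<Inter>j\<in>I. Y j -` A j \<inter> space M)) = emeasure M {\<omega> \<in> space M. \<forall>j\<in>I. Y j \<omega> \<in> A j}"
        by (simp add: emeasure_eq_measure)
      also have "\<dots> = emeasure M {\<omega> \<in> space M. \<forall>j\<in>I. Y j \<omega> \<in> (if j \<in> I then A j else space N)}"
        by simp
      also have "\<dots> = (\<Prod>j\<in>I. emeasure M {\<omega> \<in> space M. Y i\<^sub>0 \<omega> \<in> (if j \<in> I then A j else space N)})"
        using A by (intro prod) auto
      also have "\<dots> = (\<Prod>j\<in>I. emeasure M {\<omega> \<in> space M. Y j \<omega> \<in> A j})"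
        using A by (intro prod.cong) (auto simp: Pi_iff same[symmetric])
      also have "\<dots> = ennreal (\<Prod>j\<in>I. prob (Y j -` A j \<inter> space M))"
        by (simp add: emeasure_eq_measure prod_ennreal vimage_def Int_def conj_commute)
      finally show "prob (\<Inter>j\<in>I. Y j -` A j \<inter> space M) = (\<Prod>j\<in>I. prob (Y j -` A j \<inter> space M))"
        by (simp add: prod_nonneg)
    qed
  qed (use I Y in \<open>auto simp: sets.sigma_sets_eq Int_stable_def sets.space_closed\<close>)
  moreover have "distr M N (Y i) = distr M N (Y i\<^sub>0)" if "i \<in> I" for i
    by (rule measure_eqI) (auto simp: emeasure_distr vimage_def Int_def conj_commute same[OF that])
  ultimately show ?thesis by blast
qed

lemma indep_identically_distributed_compose:
  assumes "indep_vars (\<lambda>_. N) Y I" and "\<forall>i\<in>I. distr M N (Y i) = distr M N (Y i\<^sub>0)"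
    and f: "f \<in> N \<rightarrow>\<^sub>M K" and "i\<^sub>0 \<in> I"
  shows "indep_vars (\<lambda>_. K) (\<lambda>i \<omega>. f (Y i \<omega>)) I
    \<and> (\<forall>i\<in>I. distr M K (\<lambda>\<omega>. f (Y i \<omega>)) = distr M K (\<lambda>\<omega>. f (Y i\<^sub>0 \<omega>)))"
proof -
  have Y: "Y i \<in> M \<rightarrow>\<^sub>M N" if "i \<in> I" for i
    using assms(1) that by (simp add: indep_vars_def2)
  have "distr M K (\<lambda>\<omega>. f (Y i \<omega>)) = distr (distr M N (Y i)) K f" if "i \<in> I" for i
    using distr_distr[OF f Y[OF that]] by (simp add: comp_def)
  then have "distr M K (\<lambda>\<omega>. f (Y i \<omega>)) = distr M K (\<lambda>\<omega>. f (Y i\<^sub>0 \<omega>))" if "i \<in> I" for i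
    using assms(2,4) that by metis
  moreover have "indep_vars (\<lambda>_. K) (\<lambda>i \<omega>. f (Y i \<omega>)) I"
    using indep_vars_compose2[OF assms(1), where Y = "\<lambda>_. f" and N = "\<lambda>_. K"] f by simp
  ultimately show ?thesis by blast
qed

lemma
  assumes ind: "indep_vars (\<lambda>_. N) X UNIV" and ident: "\<And>k. distr M N (X k) = distr M N (X 0)"
  defines "\<mu> \<equiv> distr M N (X 0)"
  shows measurable_iid_tail: "(\<lambda>\<omega> k. X (Suc k) \<omega>) \<in> M \<rightarrow>\<^sub>M (\<Pi>\<^sub>M k\<in>UNIV. \<mu>)"
    and distr_iid_tail: "distr M (\<Pi>\<^sub>M k\<in>UNIV. \<mu>) (\<lambda>\<omega> k. X (Suc k) \<omega>) = (\<Pi>\<^sub>M k\<in>UNIV. \<mu>)"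
proof -
  have X: "X k \<in> M \<rightarrow>\<^sub>M \<mu>" for k
    using ind by (simp add: indep_vars_def2 \<mu>_def)
  have P\<mu>: "prob_space \<mu>" unfolding \<mu>_def using X by (intro prob_space_distr) (simp add: \<mu>_def)
  have seq: "(\<lambda>\<omega> k. X k \<omega>) \<in> M \<rightarrow>\<^sub>M (\<Pi>\<^sub>M k\<in>UNIV. \<mu>)"
    by (rule measurable_PiM_single') (use X measurable_space[OF X] in auto)
  have "distr M (\<Pi>\<^sub>M k\<in>UNIV. \<mu>) (\<lambda>\<omega> k. X k \<omega>) = distr M (\<Pi>\<^sub>M k\<in>UNIV. N) (\<lambda>\<omega>. \<lambda>k\<in>UNIV. X k \<omega>)"
    by (rule distr_cong[OF refl sets_PiM_cong]) (simp_all add: \<mu>_def restrict_UNIV)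
  also have "\<dots> = (\<Pi>\<^sub>M k\<in>UNIV. distr M N (X k))"
    using indep_vars_iff_distr_eq_PiM[where I = UNIV and M' = "\<lambda>_. N" and X = X] ind X by (simp add: \<mu>_def)
  also have "\<dots> = (\<Pi>\<^sub>M k\<in>UNIV. \<mu>)"
    by (intro PiM_cong refl) (rule ident[folded \<mu>_def])
  finally have law: "distr M (\<Pi>\<^sub>M k\<in>UNIV. \<mu>) (\<lambda>\<omega> k. X k \<omega>) = (\<Pi>\<^sub>M k\<in>UNIV. \<mu>)" .
  have shift: "(\<lambda>\<omega> k. \<omega> (Suc k)) \<in> (\<Pi>\<^sub>M k\<in>UNIV. \<mu>) \<rightarrow>\<^sub>M (\<Pi>\<^sub>M k\<in>UNIV. \<mu>)"
    by (intro measurable_PiM_single' measurable_component_singleton) (auto simp: space_PiM)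
  from measurable_comp[OF seq shift] show "(\<lambda>\<omega> k. X (Suc k) \<omega>) \<in> M \<rightarrow>\<^sub>M (\<Pi>\<^sub>M k\<in>UNIV. \<mu>)"
    by (simp add: comp_def)
  have "distr M (\<Pi>\<^sub>M k\<in>UNIV. \<mu>) (\<lambda>\<omega> k. X (Suc k) \<omega>)
      = distr (distr M (\<Pi>\<^sub>M k\<in>UNIV. \<mu>) (\<lambda>\<omega> k. X k \<omega>)) (\<Pi>\<^sub>M k\<in>UNIV. \<mu>) (\<lambda>\<omega> k. \<omega> (Suc k))"
    using distr_distr[OF shift seq] by (simp add: comp_def)
  also have "\<dots> = (\<Pi>\<^sub>M k\<in>UNIV. \<mu>)"
    unfolding law using distr_PiM_reindex[of UNIV "\<lambda>_. \<mu>" Suc UNIV] P\<mu> by (simp add: restrict_UNIV)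
  finally show "distr M (\<Pi>\<^sub>M k\<in>UNIV. \<mu>) (\<lambda>\<omega> k. X (Suc k) \<omega>) = (\<Pi>\<^sub>M k\<in>UNIV. \<mu>)" .
qed

end

section \<open>The blocks between consecutive stopping times\<close>

text \<open>Index \<open>k\<close> of the design sequence uses \<open>x (k - 1)\<close> (index \<open>0\<close> is never looked at by \<open>tau\<close>),
  so that gluing two sequences with \<open>comb_seq d\<close> keeps the first block \<open>1..d\<close> and shifts the
  second sequence by exactly \<open>d\<close>.\<close>

definition design :: "real^'n^'m \<Rightarrow> (nat \<Rightarrow> real^'p^'n) \<Rightarrow> nat \<Rightarrow> real^'p^'m" where
  "design W x k = W ** x (k - 1)"

definition block_stats :: "real^'n^'m \<Rightarrow> nat \<Rightarrow> (nat \<Rightarrow> real^'p^'n) \<Rightarrow> enat \<times> real" where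
  "block_stats W j x = (tau (design W x) W j - tau (design W x) W (j - 1), gamma (design W x) W j)"

lemma
  fixes x :: "'a \<Rightarrow> nat \<Rightarrow> real^'p^'n" and W :: "real^'n^'m"
  assumes x: "\<And>k. (\<lambda>z. x z k) \<in> borel_measurable N"
  shows measurable_tau_design: "(\<lambda>z. tau (design W (x z)) W j) \<in> N \<rightarrow>\<^sub>M count_space UNIV"
    and measurable_block_stats: "(\<lambda>z. block_stats W j (x z)) \<in> N \<rightarrow>\<^sub>M count_space UNIV \<Otimes>\<^sub>M borel"
proof -
  have X: "(\<lambda>z. design W (x z) k) \<in> borel_measurable N" for k
    unfolding design_def by (intro borel_measurable_matrix_matrix_mult borel_measurable_const x)
  show "(\<lambda>z. tau (design W (x z)) W j) \<in> N \<rightarrow>\<^sub>M count_space UNIV"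
    using measurable_tau[where X = "\<lambda>k z. design W (x z) k" and W = W, OF X] by simp
  show "(\<lambda>z. block_stats W j (x z)) \<in> N \<rightarrow>\<^sub>M count_space UNIV \<Otimes>\<^sub>M borel"
    unfolding block_stats_def
    using measurable_tau_diff[where X = "\<lambda>k z. design W (x z) k" and W = W, OF X]
      borel_measurable_gamma[where X = "\<lambda>k z. design W (x z) k" and W = W, OF X]
    by (simp add: measurable_Pair)
qed

lemma block_stats_Suc_shift:
  assumes tau: "tau (design W x) W 1 = enat d" and j: "1 \<le> j"
  shows "block_stats W (Suc j) x = block_stats W j (\<lambda>k. x (d + k))"
proof -
  obtain i where i: "j = Suc i" using j by (cases j) auto
  have "(\<lambda>k. design W x (d + k)) k = design W (\<lambda>k. x (d + k)) k" if "1 \<le> k" for k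
    using that by (simp add: design_def)
  then have tau': "tau (\<lambda>k. design W x (d + k)) W n = tau (design W (\<lambda>k. x (d + k))) W n"
    and gamma': "gamma (\<lambda>k. design W x (d + k)) W n = gamma (design W (\<lambda>k. x (d + k))) W n" for n
    by (intro tau_cong gamma_cong; simp)+
  have "tau (design W x) W (Suc j) - tau (design W x) W j
      = tau (design W (\<lambda>k. x (d + k))) W j - tau (design W (\<lambda>k. x (d + k))) W i"
    using tau_Suc_shift[OF tau, of j] tau_Suc_shift[OF tau, of i] i
    by (cases "tau (design W (\<lambda>k. x (d + k))) W i"; cases "tau (design W (\<lambda>k. x (d + k))) W j")
      (simp_all add: tau')
  moreover have "gamma (design W x) W (Suc j) = gamma (design W (\<lambda>k. x (d + k))) W j"
    using gamma_Suc_shift[OF tau, of i] i by (simp add: gamma')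
  ultimately show ?thesis by (simp add: block_stats_def i)
qed

lemma
  fixes W :: "real^'n^'m"
  shows tau_one_design_comb_seq:
      "tau (design W (comb_seq d \<omega> \<omega>')) W 1 = enat d \<longleftrightarrow> tau (design W \<omega>) W 1 = enat d"
    and block_stats_one_comb_seq:
      "tau (design W \<omega>) W 1 = enat d \<Longrightarrow> block_stats W 1 (comb_seq d \<omega> \<omega>') = block_stats W 1 \<omega>"
proof -
  have eq: "design W (comb_seq d \<omega> \<omega>') k = design W \<omega> k" if "1 \<le> k" "k \<le> d" for k
    using that by (simp add: design_def comb_seq_less)
  show "tau (design W (comb_seq d \<omega> \<omega>')) W 1 = enat d \<longleftrightarrow> tau (design W \<omega>) W 1 = enat d"
    using tau_one_gamma_one_local(1)[of "design W \<omega>" W d "design W (comb_seq d \<omega> \<omega>')"]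
      tau_one_gamma_one_local(1)[of "design W (comb_seq d \<omega> \<omega>')" W d "design W \<omega>"] eq by auto
  show "block_stats W 1 (comb_seq d \<omega> \<omega>') = block_stats W 1 \<omega>" if "tau (design W \<omega>) W 1 = enat d"
    using tau_one_gamma_one_local[of "design W \<omega>" W d "design W (comb_seq d \<omega> \<omega>')"] that eq
    by (simp add: block_stats_def)
qed

lemma regenerative_block_stats:
  fixes \<mu> :: "(real^'p^'n) measure" and W :: "real^'n^'m"
  assumes "sequence_space \<mu>" and sets_\<mu>: "sets \<mu> = sets borel"
  shows "regenerative \<mu> (\<lambda>x. tau (design W x) W 1) (block_stats W) (count_space UNIV \<Otimes>\<^sub>M borel)"
proof -
  interpret sequence_space \<mu> by fact
  have "(\<lambda>x. x k) \<in> S \<rightarrow>\<^sub>M \<mu>" for k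
    by (rule measurable_component_singleton) simp
  then have comp: "(\<lambda>x. x k) \<in> borel_measurable S" for k
    using measurable_cong_sets[OF refl sets_\<mu>, of S] by simp
  have "(\<lambda>x. tau (design W x) W 1) \<in> S \<rightarrow>\<^sub>M count_space UNIV"
    using measurable_tau_design[where x = "\<lambda>x. x" and W = W, OF comp] .
  moreover have "block_stats W j \<in> S \<rightarrow>\<^sub>M count_space UNIV \<Otimes>\<^sub>M borel" for j
    using measurable_block_stats[where x = "\<lambda>x. x" and W = W, OF comp] by simp
  ultimately show ?thesis
    by (intro regenerative.intro regenerative_axioms.intro assms(1) tau_one_design_comb_seq
        block_stats_one_comb_seq block_stats_Suc_shift)
qed

lemma sequence_space_if_prob_space: "prob_space \<mu> \<Longrightarrow> sequence_space \<mu>"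
  unfolding sequence_space_def product_prob_space_def product_prob_space_axioms_def product_sigma_finite_def
  by (simp add: prob_space_imp_sigma_finite)

lemma (in prob_space) block_stats_indep_identically_distributed:
  fixes \<mu> :: "(real^'p^'n) measure" and X :: "'a \<Rightarrow> nat \<Rightarrow> real^'p^'n" and W :: "real^'n^'m"
  assumes seq: "sequence_space \<mu>" and sets_\<mu>: "sets \<mu> = sets borel"
    and X: "X \<in> M \<rightarrow>\<^sub>M (\<Pi>\<^sub>M k\<in>UNIV. \<mu>)" and law: "distr M (\<Pi>\<^sub>M k\<in>UNIV. \<mu>) X = (\<Pi>\<^sub>M k\<in>UNIV. \<mu>)"
    and "1 \<le> l" and fin: "2 \<le> l \<Longrightarrow> AE \<omega> in M. tau (design W (X \<omega>)) W 1 \<noteq> \<infinity>"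
  defines "N \<equiv> count_space UNIV \<Otimes>\<^sub>M borel"
  shows "indep_vars (\<lambda>_. N) (\<lambda>j \<omega>. block_stats W j (X \<omega>)) {1..l}
    \<and> (\<forall>j\<in>{1..l}. distr M N (\<lambda>\<omega>. block_stats W j (X \<omega>)) = distr M N (\<lambda>\<omega>. block_stats W 1 (X \<omega>)))"
proof -
  interpret R: regenerative \<mu> "\<lambda>x. tau (design W x) W 1" "block_stats W" N
    unfolding N_def using seq sets_\<mu> by (rule regenerative_block_stats)
  have pullback: "emeasure M {\<omega> \<in> space M. P (X \<omega>)} = emeasure R.S {x \<in> space R.S. P x}"
    if "Measurable.pred R.S P" for P
  proof -
    have "X -` {x \<in> space R.S. P x} \<inter> space M = {\<omega> \<in> space M. P (X \<omega>)}"
      using measurable_space[OF X] by auto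
    then show ?thesis using emeasure_distr[OF X, of "{x \<in> space R.S. P x}"] that by (simp add: law)
  qed
  have fin_S: "AE x in R.S. tau (design W x) W 1 \<noteq> \<infinity>" if "2 \<le> l"
  proof -
    have "{x \<in> space R.S. tau (design W x) W 1 \<noteq> \<infinity>} \<in> sets R.S" by measurable
    from AE_distr_iff[OF X this] fin[OF that] show ?thesis unfolding law by simp
  qed
  show ?thesis
  proof (rule indep_identically_distributed_if_prod)
    show "random_variable N (\<lambda>\<omega>. block_stats W j (X \<omega>))" for j
      using measurable_compose[OF X R.measurable_\<Phi>] .
    fix A :: "nat \<Rightarrow> (enat \<times> real) set" assume [measurable]: "\<And>j. A j \<in> sets N"
    show "emeasure M {\<omega> \<in> space M. \<forall>j\<in>{1..l}. block_stats W j (X \<omega>) \<in> A j}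
        = (\<Prod>j\<in>{1..l}. emeasure M {\<omega> \<in> space M. block_stats W 1 (X \<omega>) \<in> A j})"
    proof -
      have "emeasure M {\<omega> \<in> space M. \<forall>j\<in>{1..l}. block_stats W j (X \<omega>) \<in> A j}
          = emeasure R.S {x \<in> space R.S. \<forall>j\<in>{1..l}. block_stats W j x \<in> A j}"
        by (rule pullback) measurable
      also have "\<dots> = (\<Prod>j\<in>{1..l}. emeasure R.S {x \<in> space R.S. block_stats W 1 x \<in> A j})"
        by (rule R.emeasure_blocks_prod[where n = l, OF fin_S]) measurable
      also have "\<dots> = (\<Prod>j\<in>{1..l}. emeasure M {\<omega> \<in> space M. block_stats W 1 (X \<omega>) \<in> A j})"
        by (intro prod.cong refl pullback[symmetric]) measurable
      finally show ?thesis .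
    qed
  qed (use \<open>1 \<le> l\<close> in auto)
qed

theorem mainTheorem4:
  fixes M :: "'w measure"
    and A :: "real^'n^'m" and B Bh :: "real^'m^'m"
    and S :: "nat \<Rightarrow> 'w \<Rightarrow> real^'p^'n"
    and l :: nat
  assumes "prob_space M"
    and "sym_pd B" and "sym_pd Bh" and "Bh ** Bh = B"
    and "prob_space.indep_vars M (\<lambda>_. borel) S UNIV"
    and "\<And>k. distr M borel (S k) = distr M borel (S 0)"
    and "l \<ge> 1"
    and "AE \<omega> in M. tau (\<lambda>k. Bh ** A ** S k \<omega>) (Bh ** A) (l - 1) < \<infinity>"
  shows "prob_space.indep_vars M (\<lambda>_. count_space UNIV)
           (\<lambda>j \<omega>. tau (\<lambda>k. Bh ** A ** S k \<omega>) (Bh ** A) j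
                 - tau (\<lambda>k. Bh ** A ** S k \<omega>) (Bh ** A) (j - 1)) {1..l}
    \<and> (\<forall>j\<in>{1..l}.
          distr M (count_space UNIV)
            (\<lambda>\<omega>. tau (\<lambda>k. Bh ** A ** S k \<omega>) (Bh ** A) j
                 - tau (\<lambda>k. Bh ** A ** S k \<omega>) (Bh ** A) (j - 1))
        = distr M (count_space UNIV)
            (\<lambda>\<omega>. tau (\<lambda>k. Bh ** A ** S k \<omega>) (Bh ** A) 1
                 - tau (\<lambda>k. Bh ** A ** S k \<omega>) (Bh ** A) 0))
    \<and> prob_space.indep_vars M (\<lambda>_. borel)
           (\<lambda>j \<omega>. gamma (\<lambda>k. Bh ** A ** S k \<omega>) (Bh ** A) j) {1..l}
    \<and> (\<forall>j\<in>{1..l}.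
          distr M borel (\<lambda>\<omega>. gamma (\<lambda>k. Bh ** A ** S k \<omega>) (Bh ** A) j)
        = distr M borel (\<lambda>\<omega>. gamma (\<lambda>k. Bh ** A ** S k \<omega>) (Bh ** A) 1))"
proof -
  interpret prob_space M by fact
  define \<mu> where "\<mu> = distr M borel (S 0)"
  define X where "X = (\<lambda>\<omega> k. S (Suc k) \<omega>)"
  have "design (Bh ** A) (X \<omega>) k = Bh ** A ** S k \<omega>" if "1 \<le> k" for \<omega> k
    using that by (simp add: design_def X_def)
  then have tau_X: "tau (design (Bh ** A) (X \<omega>)) (Bh ** A) j = tau (\<lambda>k. Bh ** A ** S k \<omega>) (Bh ** A) j"
    and gamma_X: "gamma (design (Bh ** A) (X \<omega>)) (Bh ** A) j = gamma (\<lambda>k. Bh ** A ** S k \<omega>) (Bh ** A) j"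
    for \<omega> j by (intro tau_cong gamma_cong; simp)+
  have fin: "AE \<omega> in M. tau (design (Bh ** A) (X \<omega>)) (Bh ** A) 1 \<noteq> \<infinity>" if "2 \<le> l"
    using assms(8)
  proof eventually_elim
    case (elim \<omega>)
    then show ?case
      using tau_finite_le[of "\<lambda>k. Bh ** A ** S k \<omega>" "Bh ** A" "l - 1" 1] that by (simp add: tau_X)
  qed
  have seq: "sequence_space \<mu>"
    using assms(5) by (intro sequence_space_if_prob_space) (simp add: \<mu>_def indep_vars_def2 prob_space_distr)
  note X = measurable_iid_tail[OF assms(5,6), folded \<mu>_def X_def]
    and law = distr_iid_tail[OF assms(5,6), folded \<mu>_def X_def]
  have "sets \<mu> = sets borel" by (simp add: \<mu>_def)
  note iid = block_stats_indep_identically_distributed[OF seq this X law assms(7) fin]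
  note fst = indep_identically_distributed_compose[OF iid[THEN conjunct1] iid[THEN conjunct2] measurable_fst]
  note snd = indep_identically_distributed_compose[OF iid[THEN conjunct1] iid[THEN conjunct2] measurable_snd]
  have "1 \<in> {1..l}" using assms(7) by simp
  then show ?thesis
    using fst[unfolded block_stats_def fst_conv tau_X diff_self_eq_0]
      snd[unfolded block_stats_def snd_conv gamma_X] by blast
qed

end
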